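(* Let $f_j(\Delta_{n,k})$ denote the number of $j$-dimensional faces of the polytope $\Delta_{n,k}$. Then, as formal power series, $$ \sum_{n\ge1}\sum_{k=1}^n\sum_{j=1}^n f_j(\Delta_{n,k})\,x^k y^{n-k}t^j=\frac{xt}{(1-x-y)(1-x-y-xt)(1-x-y-yt)}. $$
   Context: For integers $0<k\le n$, $\Delta_{n,k}=\{(x_1,\ldots,x_n)\in[0,1]^n : k-1\le x_1+\cdots+x_n\le k\}$, a convex polytope in $\mathbb{R}^n$. *)

theory Defs
  imports "HOL-Analysis.Analysis" "HOL-Computational_Algebra.Formal_Power_Series"
begin

text \<open>The hypersimplex-type polytope Delta(n,k) in R^n, with R^n rendered as real^'n, n = CARD('n).\<close>
definition Delta :: "nat \<Rightarrow> (real ^ 'n::finite) set" where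
  "Delta k = {x. (\<forall>i. 0 \<le> x $ i \<and> x $ i \<le> 1) \<and>
                 real k - 1 \<le> (\<Sum>i\<in>UNIV. x $ i) \<and> (\<Sum>i\<in>UNIV. x $ i) \<le> real k}"

definition num_faces :: "nat \<Rightarrow> ('a::euclidean_space) set \<Rightarrow> nat" where
  "num_faces j P = card {F. F face_of P \<and> aff_dim F = int j}"

text \<open>Trivariate formal power series as nested fps: outer variable t, middle x, inner y.\<close>
type_synonym fps3 = "real fps fps fps"

definition varX :: fps3 where "varX = fps_const fps_X"
definition varY :: fps3 where "varY = fps_const (fps_const fps_X)"
definition varT :: fps3 where "varT = fps_X"

definition coeff3 :: "fps3 \<Rightarrow> nat \<Rightarrow> nat \<Rightarrow> nat \<Rightarrow> real" where
  "coeff3 G a b j = fps_nth (fps_nth (fps_nth G j) a) b"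

end

theory Submission
  imports Defs
begin

text \<open>A face of a polyhedron \<open>{x. \<forall>i. a\<^sub>i \<bullet> x \<le> b\<^sub>i}\<close> is cut out by the constraints active at any
  point of its relative interior. For \<open>\<Delta>\<^sub>n\<^sub>,\<^sub>k\<close> such a point is described by the set \<open>Os\<close> of
  coordinates equal to \<open>1\<close>, the set \<open>Cs\<close> of coordinates strictly between \<open>0\<close> and \<open>1\<close>, and
  whether the coordinate sum is \<open>k\<close>, \<open>k - 1\<close> or strictly in between; the face has dimension
  \<open>|Cs|\<close> in the last case and \<open>|Cs| - 1\<close> otherwise. Counting these data gives sums of trinomial
  coefficients, and Pascal's recurrence for trinomial coefficients shows that multiplying their
  generating function successively by \<open>1 - x - y\<close>, \<open>1 - x - y - yt\<close> and \<open>1 - x - y - xt\<close>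
  leaves \<open>xt\<close>.\<close>

definition fps3_of :: "(int \<Rightarrow> int \<Rightarrow> int \<Rightarrow> real) \<Rightarrow> fps3" where
  "fps3_of g = Abs_fps (\<lambda>j. Abs_fps (\<lambda>a. Abs_fps (\<lambda>b. g (int a) (int b) (int j))))"

definition supported_nonneg :: "(int \<Rightarrow> int \<Rightarrow> int \<Rightarrow> real) \<Rightarrow> bool" where
  "supported_nonneg g \<longleftrightarrow> (\<forall>a b j. a < 0 \<or> b < 0 \<or> j < 0 \<longrightarrow> g a b j = 0)"

lemma coeff3_fps3_of [simp]: "coeff3 (fps3_of g) a b j = g a b j"
  by (simp add: coeff3_def fps3_of_def)

lemma fps3_eqI: "(\<And>a b j. coeff3 F a b j = coeff3 H a b j) \<Longrightarrow> F = H"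
  unfolding coeff3_def by (intro fps_ext) metis

lemma coeff3_diff [simp]: "coeff3 (F - H) a b j = coeff3 F a b j - coeff3 H a b j"
  by (simp add: coeff3_def)

lemma coeff3_mult_varX: "coeff3 (F * varX) a b j = (if a = 0 then 0 else coeff3 F (a - 1) b j)"
  by (simp add: coeff3_def varX_def)

lemma coeff3_mult_varY: "coeff3 (F * varY) a b j = (if b = 0 then 0 else coeff3 F a (b - 1) j)"
  by (simp add: coeff3_def varY_def)

lemma coeff3_mult_varT: "coeff3 (F * varT) a b j = (if j = 0 then 0 else coeff3 F a b (j - 1))"
  by (simp add: coeff3_def varT_def)

lemma coeff3_varX_varT: "coeff3 (varX * varT) a b j = (if a = 1 \<and> b = 0 \<and> j = 1 then 1 else 0)"
proof -
  have "varX * varT = 1 * varX * varT" by simp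
  then show ?thesis
    by (simp only: coeff3_mult_varT coeff3_mult_varX) (auto simp: coeff3_def)
qed

lemma coeff3_fps3_of_mult_varX:
  "supported_nonneg g \<Longrightarrow> coeff3 (fps3_of g * varX) a b j = g (int a - 1) (int b) (int j)"
  by (simp add: coeff3_mult_varX supported_nonneg_def of_nat_diff)

lemma coeff3_fps3_of_mult_varY:
  "supported_nonneg g \<Longrightarrow> coeff3 (fps3_of g * varY) a b j = g (int a) (int b - 1) (int j)"
  by (simp add: coeff3_mult_varY supported_nonneg_def of_nat_diff)

lemma coeff3_fps3_of_mult_varXT:
  "supported_nonneg g \<Longrightarrow> coeff3 (fps3_of g * (varX * varT)) a b j = g (int a - 1) (int b) (int j - 1)"
  unfolding mult.assoc[symmetric]
  by (auto simp add: coeff3_mult_varX coeff3_mult_varT supported_nonneg_def of_nat_diff)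

lemma coeff3_fps3_of_mult_varYT:
  "supported_nonneg g \<Longrightarrow> coeff3 (fps3_of g * (varY * varT)) a b j = g (int a) (int b - 1) (int j - 1)"
  unfolding mult.assoc[symmetric]
  by (auto simp add: coeff3_mult_varY coeff3_mult_varT supported_nonneg_def of_nat_diff)

lemmas coeff3_fps3_of_mult =
  coeff3_fps3_of_mult_varX coeff3_fps3_of_mult_varY coeff3_fps3_of_mult_varXT coeff3_fps3_of_mult_varYT

definition trinomial :: "nat \<Rightarrow> nat \<Rightarrow> nat \<Rightarrow> real" where
  "trinomial p q r = fact (p + q + r) / (fact p * fact q * fact r)"

text \<open>The trinomial coefficient extended by zero to negative arguments, so that Pascal's
  recurrence holds everywhere except at the origin.\<close>
definition trinomial_int :: "int \<Rightarrow> int \<Rightarrow> int \<Rightarrow> real" where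
  "trinomial_int p q r = (if p < 0 \<or> q < 0 \<or> r < 0 then 0 else trinomial (nat p) (nat q) (nat r))"

lemma trinomial_int_neg: "p < 0 \<or> q < 0 \<or> r < 0 \<Longrightarrow> trinomial_int p q r = 0"
  by (simp add: trinomial_int_def)

lemma trinomial_int_0 [simp]: "trinomial_int 0 0 0 = 1"
  by (simp add: trinomial_int_def trinomial_def)

lemma trinomial_rec:
  assumes "0 < p + q + r"
  shows "trinomial p q r = (if p = 0 then 0 else trinomial (p - 1) q r)
    + (if q = 0 then 0 else trinomial p (q - 1) r) + (if r = 0 then 0 else trinomial p q (r - 1))"
proof -
  define N where "N = p + q + r"
  define D :: real where "D = fact p * fact q * fact r"
  have lower: "trinomial (u - 1) v w = real u * fact (N - 1) / (fact u * fact v * fact w)"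
    if "0 < u" "u + v + w = N" for u v w
  proof -
    obtain u' where "u = Suc u'" using \<open>0 < u\<close> by (cases u) auto
    moreover have "N - 1 = u' + v + w" using that \<open>u = Suc u'\<close> by simp
    ultimately show ?thesis by (simp add: trinomial_def fact_Suc del: of_nat_Suc)
  qed
  have "(if p = 0 then 0 else trinomial (p - 1) q r) = real p * fact (N - 1) / D"
    using lower[of p q r] by (auto simp: N_def D_def)
  moreover have "(if q = 0 then 0 else trinomial p (q - 1) r) = real q * fact (N - 1) / D"
    using lower[of q p r] by (auto simp: N_def D_def trinomial_def ac_simps)
  moreover have "(if r = 0 then 0 else trinomial p q (r - 1)) = real r * fact (N - 1) / D"
    using lower[of r p q] by (auto simp: N_def D_def trinomial_def ac_simps)
  moreover have "fact N = real N * fact (N - 1)"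
    using assms by (simp add: N_def fact_reduce)
  ultimately show ?thesis
    by (simp add: trinomial_def N_def D_def add_divide_distrib[symmetric] algebra_simps)
qed

lemma trinomial_int_rec:
  assumes "\<not> (p = 0 \<and> q = 0 \<and> r = 0)"
  shows "trinomial_int p q r = trinomial_int (p - 1) q r + trinomial_int p (q - 1) r + trinomial_int p q (r - 1)"
proof (cases "p < 0 \<or> q < 0 \<or> r < 0")
  case True
  then show ?thesis by (auto simp: trinomial_int_def)
next
  case False
  then have "0 < nat p + nat q + nat r" using assms by auto
  with False show ?thesis
    by (simp add: trinomial_int_def trinomial_rec nat_diff_distrib)
qed

text \<open>For \<open>n = a + b\<close>, \<open>face_count a b j\<close> will count the \<open>j\<close>-faces of \<open>\<Delta>\<^sub>n\<^sub>,\<^sub>a\<close>: the three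
  sums count those between the hyperplanes \<open>\<Sigma>x = a - 1\<close> and \<open>\<Sigma>x = a\<close>, those in \<open>\<Sigma>x = a\<close> and
  those in \<open>\<Sigma>x = a - 1\<close>. The summation index \<open>r\<close> is the level of the sum (\<open>a\<close>, resp.
  \<open>a - 1\<close> for \<open>faces_bot\<close>) minus the number of coordinates fixed to \<open>1\<close>.\<close>

definition faces_mid :: "int \<Rightarrow> int \<Rightarrow> int \<Rightarrow> real" where
  "faces_mid a b j = (\<Sum>r\<in>{1..j}. trinomial_int (a - r) j (b - j + r))"

definition faces_top :: "int \<Rightarrow> int \<Rightarrow> int \<Rightarrow> real" where
  "faces_top a b j = (\<Sum>r\<in>{1..j}. trinomial_int (a - r) (j + 1) (b - j - 1 + r))"

definition faces_bot :: "int \<Rightarrow> int \<Rightarrow> int \<Rightarrow> real" where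
  "faces_bot a b j = (\<Sum>r\<in>{1..j}. trinomial_int (a - 1 - r) (j + 1) (b - j + r))"

definition face_count :: "int \<Rightarrow> int \<Rightarrow> int \<Rightarrow> real" where
  "face_count a b j = faces_mid a b j + faces_top a b j + faces_bot a b j"

text \<open>The coefficients of \<open>xt / (1 - x - y - xt)\<close>.\<close>
definition xt_geometric :: "int \<Rightarrow> int \<Rightarrow> int \<Rightarrow> real" where
  "xt_geometric a b j = trinomial_int (a - j) (j - 1) b"

lemma supported_nonneg_faces_mid: "supported_nonneg faces_mid"
  unfolding supported_nonneg_def faces_mid_def by (auto intro!: sum.neutral trinomial_int_neg)

lemma supported_nonneg_face_count: "supported_nonneg face_count"
  unfolding supported_nonneg_def face_count_def faces_mid_def faces_top_def faces_bot_def
  by (auto simp: sum.neutral trinomial_int_neg)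

lemma supported_nonneg_xt_geometric: "supported_nonneg xt_geometric"
  unfolding supported_nonneg_def xt_geometric_def by (auto intro!: trinomial_int_neg)

lemma faces_top_rec: "faces_top a b j - faces_top (a - 1) b j - faces_top a (b - 1) j = faces_mid a (b - 1) j"
proof -
  have "faces_top a b j - faces_top (a - 1) b j - faces_top a (b - 1) j =
    (\<Sum>r\<in>{1..j}. trinomial_int (a - r) (j + 1) (b - j - 1 + r) - trinomial_int (a - r - 1) (j + 1) (b - j - 1 + r)
       - trinomial_int (a - r) (j + 1) (b - j - 1 + r - 1))"
    unfolding faces_top_def sum_subtractf by (simp add: algebra_simps)
  also have "\<dots> = (\<Sum>r\<in>{1..j}. trinomial_int (a - r) j (b - 1 - j + r))"
    by (rule sum.cong) (use trinomial_int_rec[of "a - r" "j + 1" "b - j - 1 + r" for r] in \<open>auto simp: algebra_simps\<close>)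
  finally show ?thesis by (simp add: faces_mid_def)
qed

lemma faces_bot_rec: "faces_bot a b j - faces_bot (a - 1) b j - faces_bot a (b - 1) j = faces_mid (a - 1) b j"
proof -
  have "faces_bot a b j - faces_bot (a - 1) b j - faces_bot a (b - 1) j =
    (\<Sum>r\<in>{1..j}. trinomial_int (a - 1 - r) (j + 1) (b - j + r) - trinomial_int (a - 1 - r - 1) (j + 1) (b - j + r)
       - trinomial_int (a - 1 - r) (j + 1) (b - j + r - 1))"
    unfolding faces_bot_def sum_subtractf by (simp add: algebra_simps)
  also have "\<dots> = (\<Sum>r\<in>{1..j}. trinomial_int (a - 1 - r) j (b - j + r))"
    by (rule sum.cong) (use trinomial_int_rec[of "a - 1 - r" "j + 1" "b - j + r" for r] in \<open>auto simp: algebra_simps\<close>)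
  finally show ?thesis by (simp add: faces_mid_def)
qed

lemma face_count_rec: "face_count a b j - face_count (a - 1) b j - face_count a (b - 1) j = faces_mid a b j"
  using faces_top_rec[of a b j] faces_bot_rec[of a b j]
  unfolding face_count_def by (simp add: algebra_simps)

lemma faces_mid_rec:
  "faces_mid a b j - faces_mid (a - 1) b j - faces_mid a (b - 1) j - faces_mid a (b - 1) (j - 1)
     = xt_geometric a b j"
proof (cases "1 \<le> j")
  case True
  have "faces_mid a b j - faces_mid (a - 1) b j - faces_mid a (b - 1) j =
    (\<Sum>r\<in>{1..j}. trinomial_int (a - r) j (b - j + r) - trinomial_int (a - r - 1) j (b - j + r)
       - trinomial_int (a - r) j (b - j + r - 1))"
    unfolding faces_mid_def sum_subtractf by (simp add: algebra_simps)
  also have "\<dots> = (\<Sum>r\<in>{1..j}. trinomial_int (a - r) (j - 1) (b - j + r))"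
    by (rule sum.cong) (use trinomial_int_rec[of "a - r" j "b - j + r" for r] in \<open>auto simp: algebra_simps\<close>)
  also have "{1..j} = insert j {1..j - 1}"
    using True atLeastAtMostPlus1_int_conv[of 1 "j - 1"] by simp
  also have "(\<Sum>r\<in>insert j {1..j - 1}. trinomial_int (a - r) (j - 1) (b - j + r))
      = xt_geometric a b j + faces_mid a (b - 1) (j - 1)"
    unfolding faces_mid_def xt_geometric_def by (auto intro!: sum.cong simp: algebra_simps)
  finally show ?thesis by simp
next
  case False
  then show ?thesis by (simp add: faces_mid_def xt_geometric_def trinomial_int_neg)
qed

lemma xt_geometric_rec:
  "xt_geometric a b j - xt_geometric (a - 1) b j - xt_geometric a (b - 1) j - xt_geometric (a - 1) b (j - 1)
     = (if a = 1 \<and> b = 0 \<and> j = 1 then 1 else 0)"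
  using trinomial_int_rec[of "a - j" "j - 1" b]
  by (auto simp: xt_geometric_def algebra_simps trinomial_int_neg)

lemma face_count_series:
  "fps3_of face_count * ((1 - varX - varY) * (1 - varX - varY - varX * varT) * (1 - varX - varY - varY * varT))
     = varX * varT"
proof -
  have "fps3_of face_count * ((1 - varX - varY) * (1 - varX - varY - varX * varT) * (1 - varX - varY - varY * varT))
    = fps3_of face_count * (1 - varX - varY) * (1 - varX - varY - varY * varT) * (1 - varX - varY - varX * varT)"
    by (simp only: ac_simps)
  moreover have "fps3_of face_count * (1 - varX - varY) = fps3_of faces_mid"
    by (rule fps3_eqI) (simp add: right_diff_distrib coeff3_fps3_of_mult supported_nonneg_face_count face_count_rec)
  moreover have "fps3_of faces_mid * (1 - varX - varY - varY * varT) = fps3_of xt_geometric"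
    by (rule fps3_eqI) (simp add: right_diff_distrib coeff3_fps3_of_mult supported_nonneg_faces_mid faces_mid_rec)
  moreover have "fps3_of xt_geometric * (1 - varX - varY - varX * varT) = varX * varT"
    by (rule fps3_eqI)
      (simp add: right_diff_distrib coeff3_fps3_of_mult supported_nonneg_xt_geometric xt_geometric_rec coeff3_varX_varT)
  ultimately show ?thesis
    by simp
qed

lemma face_count_eq_0:
  assumes "a = 0 \<or> j = 0 \<or> a + b < j"
  shows "face_count (int a) (int b) (int j) = 0"
proof -
  have "trinomial_int (int a - r) q (int b - int j + r) = 0"
    "trinomial_int (int a - 1 - r) q (int b - int j + r) = 0"
    "trinomial_int (int a - r) q (int b - int j - 1 + r) = 0"
    if "r \<in> {1..int j}" for r q
    using assms that by (auto intro!: trinomial_int_neg)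
  then show ?thesis
    unfolding face_count_def faces_mid_def faces_top_def faces_bot_def by simp
qed

definition ineq_set :: "'i set \<Rightarrow> ('i \<Rightarrow> 'v::euclidean_space) \<Rightarrow> ('i \<Rightarrow> real) \<Rightarrow> 'v set" where
  "ineq_set I a b = {x. \<forall>i\<in>I. a i \<bullet> x \<le> b i}"

definition eq_set :: "('i \<Rightarrow> 'v::euclidean_space) \<Rightarrow> ('i \<Rightarrow> real) \<Rightarrow> 'i set \<Rightarrow> 'v set" where
  "eq_set a b J = {y. \<forall>i\<in>J. a i \<bullet> y = b i}"

definition active_set :: "'i set \<Rightarrow> ('i \<Rightarrow> 'v::euclidean_space) \<Rightarrow> ('i \<Rightarrow> real) \<Rightarrow> 'v \<Rightarrow> 'i set" where
  "active_set I a b x = {i\<in>I. a i \<bullet> x = b i}"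

definition active_sets :: "'i set \<Rightarrow> ('i \<Rightarrow> 'v::euclidean_space) \<Rightarrow> ('i \<Rightarrow> real) \<Rightarrow> 'i set set" where
  "active_sets I a b = {active_set I a b x | x. x \<in> ineq_set I a b}"

lemma affine_eq_set: "affine (eq_set a b J)"
  unfolding affine_alt eq_set_def by (auto simp: inner_add_right algebra_simps)

lemma convex_ineq_set: "convex (ineq_set I a b)"
proof -
  have "ineq_set I a b = (\<Inter>i\<in>I. {x. a i \<bullet> x \<le> b i})" by (auto simp: ineq_set_def)
  then show ?thesis by (simp add: convex_INT convex_halfspace_le)
qed

lemma in_eq_set_active_set: "x \<in> eq_set a b (active_set I a b x)"
  by (auto simp: active_set_def eq_set_def)

lemma ineq_set_line_through:
  assumes fin: "finite I" and x: "x \<in> ineq_set I a b" and z: "z \<in> eq_set a b (active_set I a b x)"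
  shows "\<exists>e>0. \<forall>t. \<bar>t\<bar> \<le> e \<longrightarrow> x + t *\<^sub>R (z - x) \<in> ineq_set I a b"
proof -
  define K where "K = I - active_set I a b x"
  define E where "E = insert 1 ((\<lambda>i. (b i - a i \<bullet> x) / (\<bar>a i \<bullet> (z - x)\<bar> + 1)) ` K)"
  have finE: "finite E" "E \<noteq> {}" using fin by (auto simp: E_def K_def)
  have slack: "a i \<bullet> x < b i" if "i \<in> K" for i
    using x that by (force simp: K_def active_set_def ineq_set_def)
  have "Min E > 0" using finE slack by (auto simp: E_def)
  moreover have "x + t *\<^sub>R (z - x) \<in> ineq_set I a b" if t: "\<bar>t\<bar> \<le> Min E" for t
    unfolding ineq_set_def
  proof (intro CollectI ballI)
    fix i assume i: "i \<in> I"
    show "a i \<bullet> (x + t *\<^sub>R (z - x)) \<le> b i"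
    proof (cases "i \<in> K")
      case False
      then have "a i \<bullet> x = b i" "a i \<bullet> z = b i" using i z by (auto simp: K_def active_set_def eq_set_def)
      then show ?thesis by (simp add: inner_add_right inner_diff_right)
    next
      case True
      define c where "c = \<bar>a i \<bullet> (z - x)\<bar>"
      define d where "d = b i - a i \<bullet> x"
      have "Min E \<le> d / (c + 1)" using finE True by (auto simp: E_def c_def d_def)
      then have "\<bar>t\<bar> \<le> d / (c + 1)" using t by simp
      then have "\<bar>t\<bar> * (c + 1) \<le> d" by (simp add: field_simps c_def)
      moreover have "t * (a i \<bullet> (z - x)) \<le> \<bar>t\<bar> * c"
        unfolding c_def by (metis abs_ge_self abs_mult)
      moreover have "\<bar>t\<bar> * c \<le> \<bar>t\<bar> * (c + 1)" by (simp add: mult_left_mono)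
      ultimately show ?thesis by (simp add: inner_add_right d_def)
    qed
  qed
  ultimately show ?thesis by blast
qed

lemma face_of_ineq_set_contains_active:
  assumes fin: "finite I" and F: "F face_of ineq_set I a b" and x: "x \<in> F"
    and z: "z \<in> ineq_set I a b" "z \<in> eq_set a b (active_set I a b x)"
  shows "z \<in> F"
proof (cases "z = x")
  case True
  then show ?thesis using x by simp
next
  case False
  have "x \<in> ineq_set I a b" using F x face_of_imp_subset by blast
  then obtain e where e: "e > 0" "\<And>t. \<bar>t\<bar> \<le> e \<Longrightarrow> x + t *\<^sub>R (z - x) \<in> ineq_set I a b"
    using ineq_set_line_through[OF fin _ z(2)] by blast
  define w where "w = x - e *\<^sub>R (z - x)"
  have w: "w \<in> ineq_set I a b" using e(2)[of "-e"] e(1) by (simp add: w_def)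
  have "x \<in> open_segment z w"
    unfolding in_segment
  proof (intro conjI exI[of _ "1 / (1 + e)"])
    show "z \<noteq> w"
    proof
      assume "z = w"
      then have "(1 + e) *\<^sub>R (z - x) = 0" by (simp add: w_def algebra_simps)
      with False e(1) show False by simp
    qed
    have "x = (1 / (1 + e)) *\<^sub>R ((1 + e) *\<^sub>R x)" using e(1) by simp
    also have "(1 + e) *\<^sub>R x = e *\<^sub>R z + w" by (simp add: w_def algebra_simps)
    also have "(1 / (1 + e)) *\<^sub>R (e *\<^sub>R z + w) = (1 - 1 / (1 + e)) *\<^sub>R z + (1 / (1 + e)) *\<^sub>R w"
      using e(1) by (simp add: scaleR_add_right) (simp add: field_simps)
    finally show "x = (1 - 1 / (1 + e)) *\<^sub>R z + (1 / (1 + e)) *\<^sub>R w" .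
  qed (use e in auto)
  then show ?thesis using face_ofD[OF F _ z(1) w x] by blast
qed

lemma active_set_rel_interior_subset:
  assumes F: "F face_of ineq_set I a b" and x: "x \<in> rel_interior F" and y: "y \<in> F"
  shows "active_set I a b x \<subseteq> active_set I a b y"
proof
  fix i assume i: "i \<in> active_set I a b x"
  then have "i \<in> I" "a i \<bullet> x = b i" by (auto simp: active_set_def)
  obtain m where m: "m > 1" "\<forall>e. e > 1 \<and> e \<le> m \<longrightarrow> (1 - e) *\<^sub>R y + e *\<^sub>R x \<in> F"
    using convex_rel_interior_if[OF face_of_imp_convex[OF F] x] hull_inc[OF y] by blast
  then have "(1 - m) *\<^sub>R y + m *\<^sub>R x \<in> ineq_set I a b" "y \<in> ineq_set I a b"
    using F y face_of_imp_subset by blast+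
  then have "a i \<bullet> ((1 - m) *\<^sub>R y + m *\<^sub>R x) \<le> b i" "a i \<bullet> y \<le> b i"
    using \<open>i \<in> I\<close> by (auto simp: ineq_set_def)
  with \<open>a i \<bullet> x = b i\<close> have "(m - 1) * (a i \<bullet> y - b i) \<ge> 0"
    by (simp add: inner_add_right algebra_simps)
  with m(1) have "a i \<bullet> y \<ge> b i" by (simp add: zero_le_mult_iff)
  with \<open>a i \<bullet> y \<le> b i\<close> \<open>i \<in> I\<close> show "i \<in> active_set I a b y"
    by (simp add: active_set_def)
qed

lemma face_of_ineq_set_Int_eq_set:
  assumes "J \<subseteq> I"
  shows "ineq_set I a b \<inter> eq_set a b J face_of ineq_set I a b"
proof -
  have "ineq_set I a b \<inter> eq_set a b J
      = \<Inter> (insert (ineq_set I a b) ((\<lambda>i. ineq_set I a b \<inter> {x. a i \<bullet> x = b i}) ` J))"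
    by (auto simp: eq_set_def)
  also have "\<dots> face_of ineq_set I a b"
    using assms
    by (intro face_of_Inter) (auto intro!: face_of_refl face_of_Int_supporting_hyperplane_le
        convex_ineq_set[unfolded ineq_set_def] simp: ineq_set_def)
  finally show ?thesis .
qed

lemma affine_hull_ineq_set_Int_active:
  assumes fin: "finite I" and x: "x \<in> ineq_set I a b"
  shows "affine hull (ineq_set I a b \<inter> eq_set a b (active_set I a b x)) = eq_set a b (active_set I a b x)"
    (is "affine hull ?F = ?E")
proof
  show "affine hull ?F \<subseteq> ?E"
    by (intro hull_minimal affine_eq_set) auto
  show "?E \<subseteq> affine hull ?F"
  proof
    fix z assume z: "z \<in> ?E"
    obtain e where e: "e > 0" "\<And>t. \<bar>t\<bar> \<le> e \<Longrightarrow> x + t *\<^sub>R (z - x) \<in> ineq_set I a b"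
      using ineq_set_line_through[OF fin x z] by blast
    define w where "w = x + e *\<^sub>R (z - x)"
    have "w \<in> ?E" using z in_eq_set_active_set[of x a b I]
      by (auto simp: w_def eq_set_def inner_add_right inner_diff_right)
    then have "w \<in> affine hull ?F" using e by (intro hull_inc) (simp add: w_def)
    moreover have "x \<in> affine hull ?F" using x in_eq_set_active_set by (intro hull_inc) blast
    ultimately have "(1 - 1 / e) *\<^sub>R x + (1 / e) *\<^sub>R w \<in> affine hull ?F"
      by (intro mem_affine[OF affine_affine_hull]) auto
    moreover have "(1 - 1 / e) *\<^sub>R x + (1 / e) *\<^sub>R w = z"
      using e by (simp add: w_def algebra_simps)
    ultimately show "z \<in> affine hull ?F" by simp
  qed
qed

lemma face_of_ineq_set_eq_active:
  assumes fin: "finite I" and F: "F face_of ineq_set I a b" and x: "x \<in> rel_interior F"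
  shows "F = ineq_set I a b \<inter> eq_set a b (active_set I a b x)"
proof
  have xF: "x \<in> F" using x rel_interior_subset by blast
  show "ineq_set I a b \<inter> eq_set a b (active_set I a b x) \<subseteq> F"
    using face_of_ineq_set_contains_active[OF fin F xF] by blast
  show "F \<subseteq> ineq_set I a b \<inter> eq_set a b (active_set I a b x)"
  proof
    fix y assume y: "y \<in> F"
    then have "y \<in> eq_set a b (active_set I a b x)"
      using active_set_rel_interior_subset[OF F x y] by (auto simp: eq_set_def active_set_def)
    then show "y \<in> ineq_set I a b \<inter> eq_set a b (active_set I a b x)"
      using y F face_of_imp_subset by blast
  qed
qed

lemma active_set_determined_by_face:
  assumes "J \<in> active_sets I a b"
  shows "{i\<in>I. ineq_set I a b \<inter> eq_set a b J \<subseteq> {y. a i \<bullet> y = b i}} = J"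
proof -
  obtain x where x: "x \<in> ineq_set I a b" "J = active_set I a b x"
    using assms unfolding active_sets_def by blast
  then have "x \<in> ineq_set I a b \<inter> eq_set a b J" using in_eq_set_active_set by blast
  with x(2) show ?thesis by (auto simp: active_set_def eq_set_def)
qed

lemma card_faces_ineq_set:
  assumes fin: "finite I"
  shows "card {F. F face_of ineq_set I a b \<and> aff_dim F = int j}
       = card {J \<in> active_sets I a b. aff_dim (eq_set a b J) = int j}"
proof -
  define face where "face J = ineq_set I a b \<inter> eq_set a b J" for J
  have aff_dim_face: "aff_dim (face J) = aff_dim (eq_set a b J)" if J: "J \<in> active_sets I a b" for J
  proof -
    obtain x where "x \<in> ineq_set I a b" "J = active_set I a b x"
      using J unfolding active_sets_def by blast
    then have "affine hull (face J) = eq_set a b J"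
      using affine_hull_ineq_set_Int_active[OF fin] by (simp add: face_def)
    then show ?thesis by (metis aff_dim_affine_hull)
  qed
  have "inj_on face (active_sets I a b)"
  proof (rule inj_onI)
    fix J1 J2 assume J: "J1 \<in> active_sets I a b" "J2 \<in> active_sets I a b" and eq: "face J1 = face J2"
    have "J1 = {i\<in>I. face J1 \<subseteq> {y. a i \<bullet> y = b i}}" "J2 = {i\<in>I. face J2 \<subseteq> {y. a i \<bullet> y = b i}}"
      using active_set_determined_by_face[OF J(1)] active_set_determined_by_face[OF J(2)]
      by (simp_all add: face_def)
    with eq show "J1 = J2" by simp
  qed
  moreover have "{F. F face_of ineq_set I a b \<and> aff_dim F = int j}
      = face ` {J \<in> active_sets I a b. aff_dim (eq_set a b J) = int j}"
  proof (intro equalityI subsetI)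
    fix F assume "F \<in> {F. F face_of ineq_set I a b \<and> aff_dim F = int j}"
    then have F: "F face_of ineq_set I a b" and d: "aff_dim F = int j" by auto
    then have "rel_interior F \<noteq> {}"
      using face_of_imp_convex[OF F] by (auto simp: rel_interior_eq_empty)
    then obtain x where x: "x \<in> rel_interior F" by blast
    then have "active_set I a b x \<in> active_sets I a b"
      using F face_of_imp_subset rel_interior_subset unfolding active_sets_def by blast
    moreover have "F = face (active_set I a b x)"
      using face_of_ineq_set_eq_active[OF fin F x] by (simp add: face_def)
    ultimately show "F \<in> face ` {J \<in> active_sets I a b. aff_dim (eq_set a b J) = int j}"
      using d aff_dim_face by auto
  next
    fix F assume "F \<in> face ` {J \<in> active_sets I a b. aff_dim (eq_set a b J) = int j}"
    then obtain J where J: "J \<in> active_sets I a b" "aff_dim (eq_set a b J) = int j" "F = face J"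
      by blast
    then have "J \<subseteq> I" by (auto simp: active_sets_def active_set_def)
    then have "F face_of ineq_set I a b"
      using face_of_ineq_set_Int_eq_set J(3) by (simp add: face_def)
    with J aff_dim_face show "F \<in> {F. F face_of ineq_set I a b \<and> aff_dim F = int j}" by simp
  qed
  ultimately show ?thesis
    by (simp add: card_image inj_on_subset)
qed

lemma dim_coordinate_subspace:
  "dim {v::real^'n. \<forall>i. i \<notin> C \<longrightarrow> v$i = 0} = card C"
  using dim_substandard_cart[of C, where 'a=real] by (simp add: dim_vec_eq)

lemma dim_coordinate_subspace_sum_zero:
  assumes "C \<noteq> {}"
  shows "dim {v::real^'n. (\<forall>i. i \<notin> C \<longrightarrow> v$i = 0) \<and> (\<Sum>i\<in>UNIV. v$i) = 0} = card C - 1"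
proof -
  obtain c where c: "c \<in> C" using assms by blast
  define S where "S = {v::real^'n. (\<forall>i. i \<notin> C \<longrightarrow> v$i = 0) \<and> (\<Sum>i\<in>UNIV. v$i) = 0}"
  define T where "T = {v::real^'n. \<forall>i. i \<notin> {c} \<longrightarrow> v$i = 0}"
  have "subspace S"
    unfolding S_def subspace_def by (auto simp: sum.distrib sum_distrib_left[symmetric])
  moreover have "subspace T"
    unfolding T_def subspace_def by auto
  moreover have "{x + y |x y. x \<in> S \<and> y \<in> T} = {v::real^'n. \<forall>i. i \<notin> C \<longrightarrow> v$i = 0}"
  proof (intro equalityI subsetI)
    fix v assume "v \<in> {x + y |x y. x \<in> S \<and> y \<in> T}"
    then show "v \<in> {v::real^'n. \<forall>i. i \<notin> C \<longrightarrow> v$i = 0}" using c by (auto simp: S_def T_def)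
  next
    fix v :: "real^'n" assume v: "v \<in> {v. \<forall>i. i \<notin> C \<longrightarrow> v$i = 0}"
    define s where "s = (\<Sum>i\<in>UNIV. v$i)"
    have "v - s *\<^sub>R axis c 1 \<in> S"
      using v c by (auto simp: S_def s_def sum_subtractf axis_def if_distrib[of "(*) _"] cong: if_cong)
    moreover have "s *\<^sub>R axis c 1 \<in> T" by (simp add: T_def axis_def)
    ultimately show "v \<in> {x + y |x y. x \<in> S \<and> y \<in> T}"
      by (metis (mono_tags, lifting) diff_add_cancel mem_Collect_eq)
  qed
  moreover have "S \<inter> T = {0}"
  proof (intro equalityI subsetI)
    fix v assume v: "v \<in> S \<inter> T"
    have "(\<Sum>i\<in>UNIV. v$i) = v $ c"
      using v by (subst sum.remove[of _ c]) (auto simp: T_def intro!: sum.neutral)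
    then show "v \<in> {0}" using v by (auto simp: S_def T_def vec_eq_iff)
  qed (simp add: S_def T_def)
  moreover have "dim T = 1"
    unfolding T_def using dim_coordinate_subspace[of "{c}"] by simp
  ultimately have "card C = dim S + 1"
    using dim_sums_Int[of S T] dim_coordinate_subspace[of C] by simp
  then show ?thesis unfolding S_def by simp
qed

lemma sum_ones_on_split:
  fixes f :: "'n::finite \<Rightarrow> real"
  assumes "Os \<inter> Cs = {}"
  shows "(\<Sum>i\<in>UNIV. if i \<in> Os then 1 else if i \<in> Cs then f i else 0) = real (card Os) + sum f Cs"
proof -
  have "(\<Sum>i\<in>UNIV. if i \<in> Os then 1 else if i \<in> Cs then f i else 0)
      = real (card Os) + (\<Sum>i\<in>- Os. if i \<in> Cs then f i else 0)"
    by (subst sum.If_cases) (simp_all add: Compl_eq_Diff_UNIV)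
  also have "(\<Sum>i\<in>- Os. if i \<in> Cs then f i else 0) = sum f Cs"
    using assms by (simp add: sum.If_cases Int_commute Int_absorb2 disjoint_eq_subset_Compl)
  finally show ?thesis .
qed

datatype 'n Delta_constraint = Lower 'n | Upper 'n | Sum_upper | Sum_lower

fun Delta_normal :: "'n::finite Delta_constraint \<Rightarrow> real^'n" where
  "Delta_normal (Lower i) = - axis i 1"
| "Delta_normal (Upper i) = axis i 1"
| "Delta_normal Sum_upper = (\<chi> i. 1)"
| "Delta_normal Sum_lower = - (\<chi> i. 1)"

fun Delta_bound :: "nat \<Rightarrow> 'n Delta_constraint \<Rightarrow> real" where
  "Delta_bound k (Lower i) = 0"
| "Delta_bound k (Upper i) = 1"
| "Delta_bound k Sum_upper = real k"
| "Delta_bound k Sum_lower = 1 - real k"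

lemma UNIV_Delta_constraint:
  "(UNIV :: 'n Delta_constraint set) = range Lower \<union> range Upper \<union> {Sum_upper, Sum_lower}"
proof (intro equalityI subsetI)
  fix c :: "'n Delta_constraint"
  show "c \<in> range Lower \<union> range Upper \<union> {Sum_upper, Sum_lower}" by (cases c) auto
qed simp

lemma finite_UNIV_Delta_constraint: "finite (UNIV :: 'n::finite Delta_constraint set)"
  unfolding UNIV_Delta_constraint by simp

lemma inner_ones_vec [simp]: "(\<chi> i. 1) \<bullet> x = (\<Sum>i\<in>UNIV. x$i)"
  by (simp add: inner_vec_def)

lemma all_Delta_constraint:
  "(\<forall>c. P c) \<longleftrightarrow> (\<forall>i. P (Lower i)) \<and> (\<forall>i. P (Upper i)) \<and> P Sum_upper \<and> P Sum_lower"
  by (metis Delta_constraint.exhaust)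

lemma Delta_eq_ineq_set: "Delta k = ineq_set UNIV Delta_normal (Delta_bound k)"
  unfolding Delta_def ineq_set_def Ball_def
  by (simp only: all_Delta_constraint) (auto simp: inner_axis' algebra_simps)

datatype level = Mid | Top | Bot

definition level_of :: "nat \<Rightarrow> real^'n::finite \<Rightarrow> level" where
  "level_of k x = (if (\<Sum>i\<in>UNIV. x$i) = real k then Top
                   else if (\<Sum>i\<in>UNIV. x$i) = real k - 1 then Bot else Mid)"

text \<open>The constraints active at a point with coordinates equal to \<open>1\<close> on \<open>Os\<close>, strictly between
  \<open>0\<close> and \<open>1\<close> on \<open>Cs\<close>, \<open>0\<close> elsewhere, and with coordinate sum on the hyperplane given by the level.\<close>
definition Delta_active :: "'n set \<Rightarrow> 'n set \<Rightarrow> level \<Rightarrow> 'n Delta_constraint set" where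
  "Delta_active Os Cs l = {c. case c of Lower i \<Rightarrow> i \<notin> Os \<union> Cs | Upper i \<Rightarrow> i \<in> Os
                               | Sum_upper \<Rightarrow> l = Top | Sum_lower \<Rightarrow> l = Bot}"

lemma mem_Delta_active [simp]:
  "Lower i \<in> Delta_active Os Cs l \<longleftrightarrow> i \<notin> Os \<union> Cs" "Upper i \<in> Delta_active Os Cs l \<longleftrightarrow> i \<in> Os"
  "Sum_upper \<in> Delta_active Os Cs l \<longleftrightarrow> l = Top" "Sum_lower \<in> Delta_active Os Cs l \<longleftrightarrow> l = Bot"
  by (simp_all add: Delta_active_def)

lemma active_set_Delta:
  "active_set UNIV Delta_normal (Delta_bound k) x
     = Delta_active {i. x$i = 1} {i. x$i \<noteq> 0 \<and> x$i \<noteq> 1} (level_of k x)"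
proof (intro equalityI subsetI)
  fix c show "c \<in> active_set UNIV Delta_normal (Delta_bound k) x
    \<Longrightarrow> c \<in> Delta_active {i. x$i = 1} {i. x$i \<noteq> 0 \<and> x$i \<noteq> 1} (level_of k x)"
    by (cases c) (auto simp: active_set_def level_of_def inner_axis')
next
  fix c show "c \<in> Delta_active {i. x$i = 1} {i. x$i \<noteq> 0 \<and> x$i \<noteq> 1} (level_of k x)
    \<Longrightarrow> c \<in> active_set UNIV Delta_normal (Delta_bound k) x"
    by (cases c) (auto simp: active_set_def level_of_def inner_axis' split: if_splits)
qed

lemma Delta_active_inj:
  assumes "Os \<inter> Cs = {}" "Os' \<inter> Cs' = {}" "Delta_active Os Cs l = Delta_active Os' Cs' l'"
  shows "Os = Os'" "Cs = Cs'" "l = l'"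
proof -
  have "Upper i \<in> Delta_active Os Cs l \<longleftrightarrow> Upper i \<in> Delta_active Os' Cs' l'"
    "Lower i \<in> Delta_active Os Cs l \<longleftrightarrow> Lower i \<in> Delta_active Os' Cs' l'" for i
    using assms(3) by simp_all
  then have "Os = Os'" "Os \<union> Cs = Os' \<union> Cs'" by auto
  then show "Os = Os'" "Cs = Cs'" using assms(1,2) by blast+
  have "Sum_upper \<in> Delta_active Os Cs l \<longleftrightarrow> Sum_upper \<in> Delta_active Os' Cs' l'"
    "Sum_lower \<in> Delta_active Os Cs l \<longleftrightarrow> Sum_lower \<in> Delta_active Os' Cs' l'"
    using assms(3) by simp_all
  then show "l = l'" by (cases l; cases l') simp_all
qed

lemma eq_set_Delta_active:
  "eq_set Delta_normal (Delta_bound k) (Delta_active Os Cs l)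
    = {y. (\<forall>i. i \<notin> Os \<union> Cs \<longrightarrow> y$i = 0) \<and> (\<forall>i\<in>Os. y$i = 1)
          \<and> (l = Top \<longrightarrow> (\<Sum>i\<in>UNIV. y$i) = real k) \<and> (l = Bot \<longrightarrow> (\<Sum>i\<in>UNIV. y$i) = real k - 1)}"
  unfolding eq_set_def Ball_def
  by (simp only: all_Delta_constraint) (auto simp: inner_axis' algebra_simps)

lemma aff_dim_eq_set_Delta_active:
  fixes x :: "real^'n::finite"
  assumes x: "x \<in> eq_set Delta_normal (Delta_bound k) (Delta_active Os Cs l)" and disj: "Os \<inter> Cs = {}"
  shows "aff_dim (eq_set Delta_normal (Delta_bound k) (Delta_active Os Cs l)) =
     (if l = Mid then int (card Cs) else if Cs = {} then 0 else int (card Cs) - 1)"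
proof -
  let ?E = "eq_set Delta_normal (Delta_bound k) (Delta_active Os Cs l)"
  define V where "V = {v::real^'n. (\<forall>i. i \<notin> Cs \<longrightarrow> v$i = 0) \<and> (l \<noteq> Mid \<longrightarrow> (\<Sum>i\<in>UNIV. v$i) = 0)}"
  have "(+) (- x) ` ?E = V"
  proof (intro equalityI subsetI)
    fix v assume "v \<in> (+) (- x) ` ?E"
    then obtain y where y: "y \<in> ?E" "v = y - x" by auto
    then have "(\<Sum>i\<in>UNIV. v$i) = (\<Sum>i\<in>UNIV. y$i) - (\<Sum>i\<in>UNIV. x$i)" by (simp add: sum_subtractf)
    with x y have "l \<noteq> Mid \<longrightarrow> (\<Sum>i\<in>UNIV. v$i) = 0"
      unfolding eq_set_Delta_active by (cases l) auto
    moreover have "v$i = 0" if "i \<notin> Cs" for i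
      using x y that unfolding eq_set_Delta_active by (cases "i \<in> Os") auto
    ultimately show "v \<in> V" by (simp add: V_def)
  next
    fix v assume v: "v \<in> V"
    have "(\<Sum>i\<in>UNIV. (v + x)$i) = (\<Sum>i\<in>UNIV. v$i) + (\<Sum>i\<in>UNIV. x$i)" by (simp add: sum.distrib)
    with x v disj have "v + x \<in> ?E"
      unfolding V_def eq_set_Delta_active by auto
    then show "v \<in> (+) (- x) ` ?E" by (intro image_eqI[of _ _ "v + x"]) simp_all
  qed
  then have "aff_dim ?E = int (dim V)"
    using aff_dim_eq_dim[of x ?E] hull_inc[OF x] by simp
  moreover have "dim V = (if l = Mid then card Cs else if Cs = {} then 0 else card Cs - 1)"
  proof (cases "l = Mid")
    case True
    then show ?thesis using dim_coordinate_subspace[of Cs] by (simp add: V_def)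
  next
    case False
    show ?thesis
    proof (cases "Cs = {}")
      case True
      then have "V \<subseteq> {0}" by (auto simp: V_def vec_eq_iff)
      with True False show ?thesis by simp
    next
      case False
      with \<open>l \<noteq> Mid\<close> show ?thesis using dim_coordinate_subspace_sum_zero[OF False] by (simp add: V_def)
    qed
  qed
  ultimately show ?thesis
    by (auto simp: of_nat_diff card_gt_0_iff Suc_le_eq)
qed

lemma Delta_sum_strict_bounds:
  fixes x :: "real^'n::finite"
  assumes x: "x \<in> Delta k" and Cs: "Cs = {i. x$i \<noteq> 0 \<and> x$i \<noteq> 1}" "Cs \<noteq> {}"
  shows "real (card {i. x$i = 1}) < (\<Sum>i\<in>UNIV. x$i)"
    and "(\<Sum>i\<in>UNIV. x$i) < real (card {i. x$i = 1} + card Cs)"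
proof -
  have "0 \<le> x$i \<and> x$i \<le> 1" for i using x by (simp add: Delta_def)
  then have bounds: "0 < x$i \<and> x$i < 1" if "i \<in> Cs" for i
    using that Cs(1) by (auto simp: less_le)
  have disj: "{i. x$i = 1} \<inter> Cs = {}" using Cs(1) by auto
  have "(\<Sum>i\<in>UNIV. x$i) = (\<Sum>i\<in>UNIV. if i \<in> {i. x$i = 1} then 1 else if i \<in> Cs then x$i else 0)"
    using Cs(1) by (intro sum.cong) auto
  also have "\<dots> = real (card {i. x$i = 1}) + sum (($) x) Cs"
    by (rule sum_ones_on_split[OF disj])
  finally have sum_eq: "(\<Sum>i\<in>UNIV. x$i) = real (card {i. x$i = 1}) + sum (($) x) Cs" .
  have "0 < sum (($) x) Cs" using Cs(2) bounds by (intro sum_pos) auto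
  moreover have "sum (($) x) Cs < sum (\<lambda>i. 1) Cs" using Cs(2) bounds by (intro sum_strict_mono) auto
  ultimately show "real (card {i. x$i = 1}) < (\<Sum>i\<in>UNIV. x$i)"
    "(\<Sum>i\<in>UNIV. x$i) < real (card {i. x$i = 1} + card Cs)" using sum_eq by simp_all
qed

text \<open>The \<open>j\<close>-faces of \<open>\<Delta>\<^sub>n\<^sub>,\<^sub>k\<close> are described by the coordinates fixed to \<open>1\<close>, the free
  coordinates and the level of the coordinate sum; the conditions say that some point with these
  data exists.\<close>
definition face_data :: "nat \<Rightarrow> nat \<Rightarrow> ('n set \<times> 'n set \<times> level) set" where
  "face_data k j = {(Os, Cs, l). Os \<inter> Cs = {} \<and> (case l of
       Mid \<Rightarrow> card Cs = j \<and> card Os < k \<and> k \<le> card Os + j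
     | Top \<Rightarrow> card Cs = j + 1 \<and> card Os < k \<and> k \<le> card Os + j
     | Bot \<Rightarrow> card Cs = j + 1 \<and> card Os + 1 < k \<and> k \<le> card Os + 1 + j)}"

lemma active_set_Delta_in_face_data:
  fixes x :: "real^'n::finite"
  assumes x: "x \<in> Delta k" and j: "1 \<le> j"
    and d: "aff_dim (eq_set Delta_normal (Delta_bound k) (active_set UNIV Delta_normal (Delta_bound k) x)) = int j"
  shows "({i. x$i = 1}, {i. x$i \<noteq> 0 \<and> x$i \<noteq> 1}, level_of k x) \<in> face_data k j"
proof -
  define Os where "Os = {i. x$i = 1}"
  define Cs where "Cs = {i. x$i \<noteq> 0 \<and> x$i \<noteq> 1}"
  have disj: "Os \<inter> Cs = {}" by (auto simp: Os_def Cs_def)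
  have "x \<in> eq_set Delta_normal (Delta_bound k) (Delta_active Os Cs (level_of k x))"
    using in_eq_set_active_set[of x Delta_normal "Delta_bound k" UNIV]
    unfolding active_set_Delta Os_def Cs_def .
  with d have dim: "(if level_of k x = Mid then int (card Cs)
      else if Cs = {} then 0 else int (card Cs) - 1) = int j"
    using aff_dim_eq_set_Delta_active[OF _ disj] active_set_Delta[of k x] by (simp add: Os_def Cs_def)
  with j have "Cs \<noteq> {}" by (auto split: if_splits)
  then have "real (card Os) < (\<Sum>i\<in>UNIV. x$i)" "(\<Sum>i\<in>UNIV. x$i) < real (card Os + card Cs)"
    using Delta_sum_strict_bounds[OF x Cs_def] by (simp_all add: Os_def)
  moreover have "real k - 1 \<le> (\<Sum>i\<in>UNIV. x$i)" "(\<Sum>i\<in>UNIV. x$i) \<le> real k"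
    using x by (simp_all add: Delta_def)
  ultimately show ?thesis
    using disj dim \<open>Cs \<noteq> {}\<close> unfolding face_data_def Os_def[symmetric] Cs_def[symmetric]
    by (cases "level_of k x") (auto simp: level_of_def split: if_splits)
qed

lemma face_data_realised:
  assumes data: "(Os, Cs, l) \<in> face_data k j" and j: "1 \<le> j"
  shows "\<exists>x::real^'n::finite. x \<in> Delta k \<and> active_set UNIV Delta_normal (Delta_bound k) x = Delta_active Os Cs l"
proof -
  have disj: "Os \<inter> Cs = {}" using data by (simp add: face_data_def)
  define s :: real where "s = (case l of Mid \<Rightarrow> real k - real (card Os) - 1/2
      | Top \<Rightarrow> real k - real (card Os) | Bot \<Rightarrow> real k - 1 - real (card Os))"
  have s: "0 < s \<and> s < real (card Cs)"
    using data j by (cases l) (auto simp: face_data_def s_def)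
  have "Cs \<noteq> {}" using s by auto
  define q where "q = s / real (card Cs)"
  have q: "0 < q" "q < 1" using s by (auto simp: q_def)
  define x :: "real^'n" where "x = (\<chi> i. if i \<in> Os then 1 else if i \<in> Cs then q else 0)"
  have "(\<Sum>i\<in>UNIV. x$i) = real (card Os) + s"
    using sum_ones_on_split[OF disj, of "\<lambda>i. q"] \<open>Cs \<noteq> {}\<close> by (simp add: x_def q_def)
  then have "level_of k x = l" "x \<in> Delta k"
    using q by (cases l; auto simp: level_of_def s_def Delta_def x_def)+
  moreover have "{i. x$i = 1} = Os" "{i. x$i \<noteq> 0 \<and> x$i \<noteq> 1} = Cs"
    using q disj by (auto simp: x_def)
  ultimately show ?thesis
    using active_set_Delta[of k x] by auto
qed

lemma active_sets_Delta:
  assumes j: "1 \<le> j"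
  shows "{J \<in> active_sets UNIV Delta_normal (Delta_bound k). aff_dim (eq_set Delta_normal (Delta_bound k) J) = int j}
    = (\<lambda>(Os, Cs, l). Delta_active Os Cs l) ` (face_data k j :: ('n::finite set \<times> 'n set \<times> level) set)"
proof (intro equalityI subsetI)
  fix J :: "'n Delta_constraint set"
  assume "J \<in> {J \<in> active_sets UNIV Delta_normal (Delta_bound k).
    aff_dim (eq_set Delta_normal (Delta_bound k) J) = int j}"
  then obtain x :: "real^'n" where x: "x \<in> Delta k" "J = active_set UNIV Delta_normal (Delta_bound k) x"
    and d: "aff_dim (eq_set Delta_normal (Delta_bound k) J) = int j"
    unfolding active_sets_def Delta_eq_ineq_set by blast
  then show "J \<in> (\<lambda>(Os, Cs, l). Delta_active Os Cs l) ` face_data k j"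
    using active_set_Delta_in_face_data[OF x(1) j] active_set_Delta[of k x]
    by (intro image_eqI[of _ _ "({i. x$i = 1}, {i. x$i \<noteq> 0 \<and> x$i \<noteq> 1}, level_of k x)"]) auto
next
  fix J :: "'n Delta_constraint set"
  assume "J \<in> (\<lambda>(Os, Cs, l). Delta_active Os Cs l) ` face_data k j"
  then obtain Os Cs l where data: "(Os, Cs, l) \<in> face_data k j" and J: "J = Delta_active Os Cs l"
    by auto
  obtain x :: "real^'n" where x: "x \<in> Delta k" "active_set UNIV Delta_normal (Delta_bound k) x = J"
    using face_data_realised[OF data j] J by blast
  then have "J \<in> active_sets UNIV Delta_normal (Delta_bound k)"
    unfolding active_sets_def Delta_eq_ineq_set by blast
  moreover have "aff_dim (eq_set Delta_normal (Delta_bound k) J) = int j"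
  proof -
    have "x \<in> eq_set Delta_normal (Delta_bound k) (Delta_active Os Cs l)"
      using in_eq_set_active_set[of x Delta_normal "Delta_bound k" UNIV] x(2) J by simp
    moreover have "Os \<inter> Cs = {}" using data by (simp add: face_data_def)
    ultimately show ?thesis
      using aff_dim_eq_set_Delta_active[of x k Os Cs l] data j J by (cases l) (auto simp: face_data_def)
  qed
  ultimately show "J \<in> {J \<in> active_sets UNIV Delta_normal (Delta_bound k).
    aff_dim (eq_set Delta_normal (Delta_bound k) J) = int j}" by blast
qed

lemma inj_on_Delta_active: "inj_on (\<lambda>(Os, Cs, l). Delta_active Os Cs l) (face_data k j)"
  by (auto intro!: inj_onI dest: Delta_active_inj simp: face_data_def)

definition disjoint_pairs :: "int \<Rightarrow> nat \<Rightarrow> ('n set \<times> 'n set) set" where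
  "disjoint_pairs p c = {(Os, Cs). Os \<inter> Cs = {} \<and> int (card Os) = p \<and> card Cs = c}"

lemma binomial_mult_binomial_eq_trinomial:
  "real ((n choose c) * ((n - c) choose q)) = trinomial_int (int q) (int c) (int n - int q - int c)"
proof (cases "c + q \<le> n")
  case True
  then have "real ((n choose c) * ((n - c) choose q))
      = fact n / (fact c * fact (n - c)) * (fact (n - c) / (fact q * fact (n - c - q)))"
    by (simp add: binomial_fact)
  also have "\<dots> = fact n / (fact q * fact c * fact (n - q - c))"
    by (simp add: field_simps)
  finally show ?thesis
    using True by (simp add: trinomial_int_def trinomial_def nat_diff_distrib of_nat_diff)
next
  case False
  then show ?thesis by (cases "c \<le> n") (simp_all add: trinomial_int_def)
qed

lemma card_disjoint_pairs:
  "real (card (disjoint_pairs p c :: ('n::finite set \<times> 'n set) set))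
     = trinomial_int p (int c) (int CARD('n) - p - int c)"
proof (cases "p < 0")
  case True
  then have "(disjoint_pairs p c :: ('n set \<times> 'n set) set) = {}" by (auto simp: disjoint_pairs_def)
  with True show ?thesis by (simp add: trinomial_int_def)
next
  case False
  then obtain q where q: "p = int q" by (metis nonneg_int_cases not_less)
  have "disjoint_pairs p c
      = (\<lambda>(Cs, Os). (Os, Cs)) ` (SIGMA Cs:{Cs :: 'n set. card Cs = c}. {Os. Os \<subseteq> - Cs \<and> card Os = q})"
    unfolding disjoint_pairs_def q by (auto simp: image_iff disjoint_eq_subset_Compl)
  moreover have "inj_on (\<lambda>(Cs :: 'n set, Os :: 'n set). (Os, Cs)) X" for X
    by (auto simp: inj_on_def)
  moreover have "card {Os. Os \<subseteq> - Cs \<and> card Os = q} = (CARD('n) - card Cs) choose q" for Cs :: "'n set"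
    using n_subsets[of "- Cs" q] card_Diff_subset[of Cs UNIV] by (simp add: Compl_eq_Diff_UNIV)
  ultimately have "card (disjoint_pairs p c :: ('n set \<times> 'n set) set) = (CARD('n) choose c) * ((CARD('n) - c) choose q)"
    using n_subsets[of "UNIV :: 'n set" c] by (simp add: card_image card_SigmaI)
  then show ?thesis
    using binomial_mult_binomial_eq_trinomial q by simp
qed

lemma face_data_eq_UN:
  "face_data k j = (\<Union>r\<in>{1..int j}.
       (\<lambda>(Os, Cs). (Os, Cs, Mid)) ` disjoint_pairs (int k - r) j
     \<union> (\<lambda>(Os, Cs). (Os, Cs, Top)) ` disjoint_pairs (int k - r) (j + 1)
     \<union> (\<lambda>(Os, Cs). (Os, Cs, Bot)) ` disjoint_pairs (int k - 1 - r) (j + 1))"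
proof (intro equalityI subsetI)
  fix d assume "d \<in> face_data k j"
  then obtain Os Cs l where d: "d = (Os, Cs, l)" "(Os, Cs, l) \<in> face_data k j"
    by (metis prod_cases3)
  let ?r = "if l = Bot then int k - 1 - int (card Os) else int k - int (card Os)"
  have "?r \<in> {1..int j}" using d(2) by (cases l) (auto simp: face_data_def)
  with d show "d \<in> (\<Union>r\<in>{1..int j}.
       (\<lambda>(Os, Cs). (Os, Cs, Mid)) ` disjoint_pairs (int k - r) j
     \<union> (\<lambda>(Os, Cs). (Os, Cs, Top)) ` disjoint_pairs (int k - r) (j + 1)
     \<union> (\<lambda>(Os, Cs). (Os, Cs, Bot)) ` disjoint_pairs (int k - 1 - r) (j + 1))"
    by (intro UN_I[of ?r]) (cases l; force simp: face_data_def disjoint_pairs_def)+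
qed (auto simp: face_data_def disjoint_pairs_def)

lemma card_face_data:
  "real (card (face_data k j :: ('n::finite set \<times> 'n set \<times> level) set))
     = face_count (int k) (int CARD('n) - int k) (int j)"
proof -
  define tagged :: "level \<Rightarrow> int \<Rightarrow> nat \<Rightarrow> ('n set \<times> 'n set \<times> level) set"
    where "tagged l p c = (\<lambda>(Os, Cs). (Os, Cs, l)) ` disjoint_pairs p c" for l p c
  define A where "A r = tagged Mid (int k - r) j \<union> tagged Top (int k - r) (j + 1)
    \<union> tagged Bot (int k - 1 - r) (j + 1)" for r
  have card_tagged: "card (tagged l p c) = card (disjoint_pairs p c :: ('n set \<times> 'n set) set)" for l p c
    unfolding tagged_def by (rule card_image) (auto simp: inj_on_def)
  have fin: "finite (tagged l p c)" for l p c
    unfolding tagged_def by simp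
  have "card (A r) = card (tagged Mid (int k - r) j) + card (tagged Top (int k - r) (j + 1))
      + card (tagged Bot (int k - 1 - r) (j + 1))" for r
    unfolding A_def using fin by (subst card_Un_disjoint; auto simp: tagged_def)+
  moreover have "card (face_data k j :: ('n set \<times> 'n set \<times> level) set) = (\<Sum>r\<in>{1..int j}. card (A r))"
    unfolding face_data_eq_UN A_def[unfolded tagged_def, symmetric] using fin
    by (intro card_UN_disjoint) (auto simp: A_def tagged_def disjoint_pairs_def)
  ultimately show ?thesis
    unfolding face_count_def faces_mid_def faces_top_def faces_bot_def
    by (simp add: card_tagged card_disjoint_pairs sum.distrib algebra_simps)
qed

lemma num_faces_Delta:
  assumes "1 \<le> j"
  shows "real (num_faces j (Delta k :: (real^'n::finite) set)) = face_count (int k) (int CARD('n) - int k) (int j)"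
proof -
  have "num_faces j (Delta k :: (real^'n) set)
      = card {J \<in> active_sets UNIV (Delta_normal :: 'n Delta_constraint \<Rightarrow> _) (Delta_bound k).
      aff_dim (eq_set Delta_normal (Delta_bound k) J) = int j}"
    unfolding num_faces_def Delta_eq_ineq_set
    by (rule card_faces_ineq_set[OF finite_UNIV_Delta_constraint])
  also have "\<dots> = card (face_data k j :: ('n set \<times> 'n set \<times> level) set)"
    unfolding active_sets_Delta[OF assms] by (rule card_image[OF inj_on_Delta_active])
  finally show ?thesis by (simp add: card_face_data)
qed

theorem corollary2p2:
  "\<exists>G :: fps3.
     G * ((1 - varX - varY) * (1 - varX - varY - varX * varT) * (1 - varX - varY - varY * varT))
       = varX * varT
   \<and> (\<forall>a b j. (a = 0 \<or> j = 0 \<or> a + b < j) \<longrightarrow> coeff3 G a b j = 0)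
   \<and> (\<forall>k j. 1 \<le> k \<and> k \<le> CARD('n::finite) \<and> 1 \<le> j \<and> j \<le> CARD('n) \<longrightarrow>
        coeff3 G k (CARD('n) - k) j = real (num_faces j (Delta k :: (real ^ 'n) set)))"
proof (intro exI[of _ "fps3_of face_count"] conjI allI impI)
  show "fps3_of face_count * ((1 - varX - varY) * (1 - varX - varY - varX * varT) * (1 - varX - varY - varY * varT))
      = varX * varT"
    by (rule face_count_series)
next
  fix a b j :: nat
  assume "a = 0 \<or> j = 0 \<or> a + b < j"
  then show "coeff3 (fps3_of face_count) a b j = 0" by (simp add: face_count_eq_0)
next
  fix k j :: nat
  assume "1 \<le> k \<and> k \<le> CARD('n) \<and> 1 \<le> j \<and> j \<le> CARD('n)"
  then show "coeff3 (fps3_of face_count) k (CARD('n) - k) j = real (num_faces j (Delta k :: (real ^ 'n) set))"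
    using num_faces_Delta[of j k, where 'n='n] by (simp add: of_nat_diff)
qed

end
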